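(* Let $\mathbf{a}=(a_1,a_2,a_3,a_4)\in\mathbb C^4$ and let $$S_{\mathbf a}=\{(x_1,x_2,x_3)\in\mathbb C^3 : x_1^2+x_2^2+x_3^2+x_1x_2x_3=a_1x_1+a_2x_2+a_3x_3+a_4\},$$ equipped with the holomorphic symplectic form $$\Omega=\frac{dx_1\wedge dx_2}{2x_3+x_1x_2-a_3}=\frac{dx_2\wedge dx_3}{2x_1+x_2x_3-a_1}=\frac{dx_3\wedge dx_1}{2x_2+x_1x_3-a_2}.$$ Let $\mathcal F_1=\ker(dx_1)$ and $\mathcal F_2=\ker(dx_2)$ restricted to $S_{\mathbf a}$, considered on the open set of smooth points where they are transversal. Then the Hess connection of the bi-Lagrangian manifold $(S_{\mathbf a},\Omega,\mathcal F_1,\mathcal F_2)$ is flat if and only if $\mathbf a=(0,0,0,4)$.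
   Context: A bi-Lagrangian structure on a (holomorphic) symplectic manifold $(M,\omega)$ is a pair of transversal Lagrangian foliations; on a surface, any pair of transversal foliations by curves is bi-Lagrangian. The Hess connection of a bi-Lagrangian manifold $(M,\omega,\mathcal F_1,\mathcal F_2)$ is the unique torsion-free affine connection $\nabla$ on $TM$ such that $X\cdot\omega(Y,Z)=\omega(\nabla_XY,Z)+\omega(Y,\nabla_XZ)$ for all vector fields $X,Y,Z$, and $\nabla_XY$ is tangent to $\mathcal F_j$ whenever $Y$ is tangent to $\mathcal F_j$ ($j=1,2$). It is flat if its curvature $R(X,Y)Z=\nabla_X\nabla_YZ-\nabla_Y\nabla_XZ-\nabla_{[X,Y]}Z$ vanishes identically. *)

theory Defs
  imports "HOL-Analysis.Analysis"
begin

text \<open>Points of the chart domain are pairs (x1, x2) in C^2. Coordinate indices are 0 (for x1)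
and 1 (for x2).\<close>

definition holo2 :: "(complex \<times> complex) set \<Rightarrow> (complex \<times> complex \<Rightarrow> complex) \<Rightarrow> bool" where
  "holo2 V f \<longleftrightarrow>
     (\<forall>p\<in>V. \<exists>c1 c2. (f has_derivative (\<lambda>h. c1 * fst h + c2 * snd h)) (at p))"

definition pd :: "nat \<Rightarrow> (complex \<times> complex \<Rightarrow> complex) \<Rightarrow> complex \<times> complex \<Rightarrow> complex" where
  "pd i f p = (if i = 0 then deriv (\<lambda>t. f (t, snd p)) (fst p)
                         else deriv (\<lambda>t. f (fst p, t)) (snd p))"

definition on_S :: "complex \<Rightarrow> complex \<Rightarrow> complex \<Rightarrow> complex \<Rightarrow> complex \<Rightarrow> complex \<Rightarrow> complex \<Rightarrow> bool" where
  "on_S a1 a2 a3 a4 x1 x2 x3 \<longleftrightarrow>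
     x1^2 + x2^2 + x3^2 + x1*x2*x3 = a1*x1 + a2*x2 + a3*x3 + a4"

text \<open>An (x1,x2)-chart of the open set U of S_a where F1 = ker dx1 and F2 = ker dx2 are
transversal (equivalently, where 2x3 + x1x2 - a3 \<noteq> 0; these points are smooth):
an open V in C^2 and a holomorphic x3 = phi(x1,x2) whose graph lies in U.
Such charts cover U (implicit function theorem).\<close>
definition x12_chart :: "complex \<Rightarrow> complex \<Rightarrow> complex \<Rightarrow> complex \<Rightarrow>
    (complex \<times> complex) set \<Rightarrow> (complex \<times> complex \<Rightarrow> complex) \<Rightarrow> bool" where
  "x12_chart a1 a2 a3 a4 V \<phi> \<longleftrightarrow> open V \<and> holo2 V \<phi> \<and>
     (\<forall>p\<in>V. on_S a1 a2 a3 a4 (fst p) (snd p) (\<phi> p) \<and>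
             2 * \<phi> p + fst p * snd p - a3 \<noteq> 0)"

text \<open>Components omega_{jk} = Omega(d_j, d_k) of the symplectic form in the chart:
Omega = dx1 \<and> dx2 / (2x3 + x1x2 - a3).\<close>
definition omega :: "complex \<Rightarrow> (complex \<times> complex \<Rightarrow> complex) \<Rightarrow> nat \<Rightarrow> nat \<Rightarrow>
    complex \<times> complex \<Rightarrow> complex" where
  "omega a3 \<phi> j k p =
     (if j = 0 \<and> k = 1 then 1 / (2 * \<phi> p + fst p * snd p - a3)
      else if j = 1 \<and> k = 0 then - (1 / (2 * \<phi> p + fst p * snd p - a3))
      else 0)"

text \<open>Christoffel symbols: Gamma k i j p is the d_k-component of nabla_{d_i} d_j at p.
The Hess conditions in the coordinate frame: holomorphic, torsion-free, Omega parallel,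
and preserving F1 (tangent to d_1, i.e. x1 = const) and F2 (tangent to d_0).\<close>
definition hess_conn :: "complex \<Rightarrow> (complex \<times> complex) set \<Rightarrow> (complex \<times> complex \<Rightarrow> complex) \<Rightarrow>
    (nat \<Rightarrow> nat \<Rightarrow> nat \<Rightarrow> complex \<times> complex \<Rightarrow> complex) \<Rightarrow> bool" where
  "hess_conn a3 V \<phi> \<Gamma> \<longleftrightarrow>
     (\<forall>i<2. \<forall>j<2. \<forall>k<2. holo2 V (\<Gamma> k i j)) \<and>
     (\<forall>p\<in>V. \<forall>i<2. \<forall>j<2. \<forall>k<2.
        \<Gamma> k i j p = \<Gamma> k j i p \<and>
        pd i (omega a3 \<phi> j k) p =
          (\<Sum>l<2. \<Gamma> l i j p * omega a3 \<phi> l k p) + (\<Sum>l<2. \<Gamma> l i k p * omega a3 \<phi> j l p)) \<and>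
     (\<forall>p\<in>V. \<forall>i<2. \<Gamma> 0 i 1 p = 0 \<and> \<Gamma> 1 i 0 p = 0)"

text \<open>Curvature components: R(d_i,d_j) d_k = sum_l curv l k i j d_l.\<close>
definition curv :: "(nat \<Rightarrow> nat \<Rightarrow> nat \<Rightarrow> complex \<times> complex \<Rightarrow> complex) \<Rightarrow>
    nat \<Rightarrow> nat \<Rightarrow> nat \<Rightarrow> nat \<Rightarrow> complex \<times> complex \<Rightarrow> complex" where
  "curv \<Gamma> l k i j p =
     pd i (\<Gamma> l j k) p - pd j (\<Gamma> l i k) p +
     (\<Sum>m<2. \<Gamma> l i m p * \<Gamma> m j k p - \<Gamma> l j m p * \<Gamma> m i k p)"

definition flat_on :: "(complex \<times> complex) set \<Rightarrow> (nat \<Rightarrow> nat \<Rightarrow> nat \<Rightarrow> complex \<times> complex \<Rightarrow> complex) \<Rightarrow> bool" where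
  "flat_on V \<Gamma> \<longleftrightarrow> (\<forall>p\<in>V. \<forall>l<2. \<forall>k<2. \<forall>i<2. \<forall>j<2. curv \<Gamma> l k i j p = 0)"

text \<open>The Hess connection of (S_a, Omega, F1, F2) on the transversality locus is flat:
in every (x1,x2)-chart, the (unique) Hess connection has vanishing curvature.\<close>
definition hess_flat :: "complex \<Rightarrow> complex \<Rightarrow> complex \<Rightarrow> complex \<Rightarrow> bool" where
  "hess_flat a1 a2 a3 a4 \<longleftrightarrow>
     (\<forall>V \<phi> \<Gamma>. x12_chart a1 a2 a3 a4 V \<phi> \<and> hess_conn a3 V \<phi> \<Gamma> \<longrightarrow> flat_on V \<Gamma>)"

end

theory Submission
  imports Defs "HOL-Computational_Algebra.Polynomial"
begin

text \<open>Over the \<open>(x1, x2)\<close>-plane the equation of \<open>S_a\<close> is quadratic in \<open>x3\<close>, so on a chart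
\<open>r\<^sup>2 = disc\<close> for \<open>r = 2 x3 + x1 x2 - a3\<close>, and \<open>\<Omega> = dx1 \<and> dx2 / r\<close>. Parallelism of \<open>\<Omega>\<close> and
preservation of both coordinate foliations leave only \<open>\<Gamma>\<^sup>0\<^sub>0\<^sub>0 = -\<partial>\<^sub>1 disc / (2 disc)\<close> and
\<open>\<Gamma>\<^sup>1\<^sub>1\<^sub>1 = -\<partial>\<^sub>2 disc / (2 disc)\<close>, and the curvature reduces to \<open>\<partial>\<^sub>1\<partial>\<^sub>2 log disc\<close>. Hence the
Hess connection is flat iff \<open>disc \<cdot> \<partial>\<^sub>1\<partial>\<^sub>2 disc = \<partial>\<^sub>1 disc \<cdot> \<partial>\<^sub>2 disc\<close> wherever \<open>disc \<noteq> 0\<close> (every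
such point lies on a chart, by choosing a branch of the square root). For \<open>a = (0, 0, 0, 4)\<close> the
discriminant factors as \<open>(x1\<^sup>2 - 4)(x2\<^sup>2 - 4)\<close>; for any other \<open>a\<close>, restricted to a coordinate axis
both \<open>disc\<close> and \<open>disc \<cdot> \<partial>\<^sub>1\<partial>\<^sub>2 disc - \<partial>\<^sub>1 disc \<cdot> \<partial>\<^sub>2 disc\<close> are nonzero polynomials in one variable, so they have a common non-root.\<close>

section \<open>The discriminant of \<open>S_a\<close> over the \<open>(x1, x2)\<close>-plane\<close>

definition disc :: "complex \<Rightarrow> complex \<Rightarrow> complex \<Rightarrow> complex \<Rightarrow> complex \<Rightarrow> complex \<Rightarrow> complex" where
  "disc a1 a2 a3 a4 x y = (x * y - a3)^2 - 4 * (x^2 + y^2 - a1 * x - a2 * y - a4)"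

definition disc_dx :: "complex \<Rightarrow> complex \<Rightarrow> complex \<Rightarrow> complex \<Rightarrow> complex" where
  "disc_dx a1 a3 x y = 2 * x * y^2 - 2 * a3 * y - 8 * x + 4 * a1"

definition disc_dy :: "complex \<Rightarrow> complex \<Rightarrow> complex \<Rightarrow> complex \<Rightarrow> complex" where
  "disc_dy a2 a3 x y = 2 * x^2 * y - 2 * a3 * x - 8 * y + 4 * a2"

text \<open>\<open>disc\<^sup>2\<close> times the mixed second derivative of \<open>log disc\<close>.\<close>

definition disc_log_mixed :: "complex \<Rightarrow> complex \<Rightarrow> complex \<Rightarrow> complex \<Rightarrow> complex \<Rightarrow> complex \<Rightarrow> complex" where
  "disc_log_mixed a1 a2 a3 a4 x y =
     disc a1 a2 a3 a4 x y * (4 * x * y - 2 * a3) - disc_dx a1 a3 x y * disc_dy a2 a3 x y"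

lemma on_S_iff_disc: "on_S a1 a2 a3 a4 x y z \<longleftrightarrow> (2 * z + x * y - a3)^2 = disc a1 a2 a3 a4 x y"
proof -
  have "(2 * z + x * y - a3)^2 - disc a1 a2 a3 a4 x y =
        4 * ((x^2 + y^2 + z^2 + x * y * z) - (a1 * x + a2 * y + a3 * z + a4))"
    by (simp add: disc_def power2_eq_square algebra_simps)
  then show ?thesis
    unfolding on_S_def by (metis eq_iff_diff_eq_0 mult_eq_0_iff zero_neq_numeral)
qed

lemma has_field_derivative_disc_x:
  "((\<lambda>t. disc a1 a2 a3 a4 t y) has_field_derivative disc_dx a1 a3 x y) (at x)"
  unfolding disc_def disc_dx_def
  by (rule derivative_eq_intros refl | simp)+ (simp add: algebra_simps power2_eq_square)

lemma has_field_derivative_disc_y: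
  "((\<lambda>t. disc a1 a2 a3 a4 x t) has_field_derivative disc_dy a2 a3 x y) (at y)"
  unfolding disc_def disc_dy_def
  by (rule derivative_eq_intros refl | simp)+ (simp add: algebra_simps power2_eq_square)

lemma has_field_derivative_disc_dx_y:
  "((\<lambda>t. disc_dx a1 a3 x t) has_field_derivative 4 * x * y - 2 * a3) (at y)"
  unfolding disc_dx_def by (rule derivative_eq_intros refl | simp)+

lemma has_field_derivative_disc_dy_x:
  "((\<lambda>t. disc_dy a2 a3 t y) has_field_derivative 4 * x * y - 2 * a3) (at x)"
  unfolding disc_dy_def by (rule derivative_eq_intros refl | simp)+

lemma disc_swap: "disc a1 a2 a3 a4 x y = disc a2 a1 a3 a4 y x"
  by (simp add: disc_def algebra_simps)

lemma disc_log_mixed_swap: "disc_log_mixed a1 a2 a3 a4 x y = disc_log_mixed a2 a1 a3 a4 y x"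
  by (simp add: disc_log_mixed_def disc_dx_def disc_dy_def disc_swap[of a1] algebra_simps)

lemma disc_log_mixed_0004: "disc_log_mixed 0 0 0 4 x y = 0"
proof -
  have factor: "disc 0 0 0 4 x y = (x^2 - 4) * (y^2 - 4)"
    by (simp add: disc_def algebra_simps power2_eq_square)
  show ?thesis
    unfolding disc_log_mixed_def disc_dx_def disc_dy_def factor
    by (simp add: algebra_simps power2_eq_square)
qed

lemma ex_common_nonroot:
  fixes p q :: "'a::{idom, ring_char_0} poly"
  assumes "p \<noteq> 0" "q \<noteq> 0"
  shows "\<exists>y. poly p y \<noteq> 0 \<and> poly q y \<noteq> 0"
  using poly_all_0_iff_0[of "p * q"] assms by auto

lemma ex_disc_log_mixed_nonzero_on_axis:
  assumes "a1 \<noteq> 0 \<or> a3 \<noteq> 0"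
  shows "\<exists>y. disc a1 a2 a3 a4 0 y \<noteq> 0 \<and> disc_log_mixed a1 a2 a3 a4 0 y \<noteq> 0"
proof -
  have disc: "disc a1 a2 a3 a4 0 y = poly [:a3^2 + 4 * a4, 4 * a2, -4:] y" for y
    by (simp add: disc_def algebra_simps power2_eq_square)
  define c0 where "c0 = -2 * a3^3 - 8 * a3 * a4 - 16 * a1 * a2"
  have mixed: "disc_log_mixed a1 a2 a3 a4 0 y = poly [:c0, 32 * a1, -8 * a3:] y" for y
    by (simp add: c0_def disc_log_mixed_def disc disc_dx_def disc_dy_def algebra_simps
        power2_eq_square power3_eq_cube)
  have "[:a3^2 + 4 * a4, 4 * a2, -4:] \<noteq> 0" "[:c0, 32 * a1, -8 * a3:] \<noteq> 0"
    using assms by simp_all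
  then show ?thesis
    unfolding disc mixed by (rule ex_common_nonroot)
qed

lemma ex_disc_log_mixed_nonzero:
  assumes "\<not> (a1 = 0 \<and> a2 = 0 \<and> a3 = 0 \<and> a4 = 4)"
  shows "\<exists>x y. disc a1 a2 a3 a4 x y \<noteq> 0 \<and> disc_log_mixed a1 a2 a3 a4 x y \<noteq> 0"
proof -
  consider "a1 \<noteq> 0 \<or> a3 \<noteq> 0" | "a2 \<noteq> 0" | "a1 = 0" "a2 = 0" "a3 = 0" "a4 \<noteq> 4"
    using assms by blast
  then show ?thesis
  proof cases
    case 1
    then show ?thesis using ex_disc_log_mixed_nonzero_on_axis by blast
  next
    case 2
    then obtain x where "disc a2 a1 a3 a4 0 x \<noteq> 0" "disc_log_mixed a2 a1 a3 a4 0 x \<noteq> 0"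
      using ex_disc_log_mixed_nonzero_on_axis[of a2 a3 a1 a4] by blast
    then have "disc a1 a2 a3 a4 x 0 \<noteq> 0 \<and> disc_log_mixed a1 a2 a3 a4 x 0 \<noteq> 0"
      by (simp add: disc_swap[of a1] disc_log_mixed_swap[of a1])
    then show ?thesis by blast
  next
    case 3
    then have "disc a1 a2 a3 a4 1 2 = 4 * (a4 - 4)" "disc_log_mixed a1 a2 a3 a4 1 2 = 32 * (a4 - 4)"
      by (simp_all add: disc_log_mixed_def disc_def disc_dx_def disc_dy_def)
    then show ?thesis
      using 3 by (intro exI[of _ 1] exI[of _ 2]) simp
  qed
qed

section \<open>Holomorphy at a point of \<open>\<complex>\<^sup>2\<close>\<close>

definition holo_at :: "(complex \<times> complex \<Rightarrow> complex) \<Rightarrow> complex \<times> complex \<Rightarrow> bool" where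
  "holo_at f p \<longleftrightarrow> (\<exists>c1 c2. (f has_derivative (\<lambda>h. c1 * fst h + c2 * snd h)) (at p))"

lemma holo2_iff_holo_at: "holo2 V f \<longleftrightarrow> (\<forall>p\<in>V. holo_at f p)"
  by (simp add: holo2_def holo_at_def)

lemma holo_atI:
  assumes "(f has_derivative F) (at p)" "\<And>h. F h = c1 * fst h + c2 * snd h"
  shows "holo_at f p"
proof -
  have "F = (\<lambda>h. c1 * fst h + c2 * snd h)"
    using assms(2) by auto
  then show ?thesis
    unfolding holo_at_def using assms(1) by blast
qed

lemma holo_at_const [simp]: "holo_at (\<lambda>q. c) p"
  unfolding holo_at_def by (intro exI[of _ 0]) simp

lemma holo_at_fst [simp]: "holo_at fst p"
  unfolding holo_at_def
  by (intro exI[of _ 1] exI[of _ 0]) (simp add: has_derivative_fst[OF has_derivative_ident])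

lemma holo_at_snd [simp]: "holo_at snd p"
  unfolding holo_at_def
  by (intro exI[of _ 0] exI[of _ 1]) (simp add: has_derivative_snd[OF has_derivative_ident])

lemma holo_at_add:
  assumes "holo_at f p" "holo_at g p"
  shows "holo_at (\<lambda>q. f q + g q) p"
proof -
  obtain a1 a2 b1 b2 where
    "(f has_derivative (\<lambda>h. a1 * fst h + a2 * snd h)) (at p)"
    "(g has_derivative (\<lambda>h. b1 * fst h + b2 * snd h)) (at p)"
    using assms unfolding holo_at_def by blast
  from has_derivative_add[OF this] show ?thesis
    by (rule holo_atI[of _ _ _ "a1 + b1" "a2 + b2"]) (simp add: algebra_simps)
qed

lemma holo_at_mult:
  assumes "holo_at f p" "holo_at g p"
  shows "holo_at (\<lambda>q. f q * g q) p"
proof -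
  obtain a1 a2 b1 b2 where
    "(f has_derivative (\<lambda>h. a1 * fst h + a2 * snd h)) (at p)"
    "(g has_derivative (\<lambda>h. b1 * fst h + b2 * snd h)) (at p)"
    using assms unfolding holo_at_def by blast
  from has_derivative_mult[OF this] show ?thesis
    by (rule holo_atI[of _ _ _ "f p * b1 + a1 * g p" "f p * b2 + a2 * g p"])
       (simp add: algebra_simps)
qed

lemma holo_at_compose:
  assumes "(h has_field_derivative d) (at (f p))" "holo_at f p"
  shows "holo_at (\<lambda>q. h (f q)) p"
proof -
  obtain a1 a2 where "(f has_derivative (\<lambda>h. a1 * fst h + a2 * snd h)) (at p)"
    using assms(2) unfolding holo_at_def by blast
  from has_derivative_compose[OF this assms(1)[unfolded has_field_derivative_def]]
  show ?thesis
    by (rule holo_atI[of _ _ _ "d * a1" "d * a2"]) (simp add: algebra_simps)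
qed

lemma holo_at_uminus: "holo_at f p \<Longrightarrow> holo_at (\<lambda>q. - f q) p"
  by (rule holo_at_compose[OF DERIV_minus[OF DERIV_ident]])

lemma holo_at_diff: "holo_at f p \<Longrightarrow> holo_at g p \<Longrightarrow> holo_at (\<lambda>q. f q - g q) p"
  using holo_at_add[of f p "\<lambda>q. - g q"] holo_at_uminus[of g p] by simp

lemma holo_at_power: "holo_at f p \<Longrightarrow> holo_at (\<lambda>q. f q ^ n) p"
  by (rule holo_at_compose[OF DERIV_power[OF DERIV_ident]])

lemma holo_at_divide:
  assumes "holo_at f p" "holo_at g p" "g p \<noteq> 0"
  shows "holo_at (\<lambda>q. f q / g q) p"
  using holo_at_mult[OF assms(1) holo_at_compose[OF DERIV_inverse[OF assms(3)] assms(2)]]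
  by (simp add: divide_inverse)

lemma holo_at_csqrt: "holo_at f p \<Longrightarrow> 0 < Re (f p) \<Longrightarrow> holo_at (\<lambda>q. csqrt (f q)) p"
  by (rule holo_at_compose[OF has_field_derivative_csqrt]) (auto simp: complex_nonpos_Reals_iff)

lemmas holo_at_intros =
  holo_at_const holo_at_fst holo_at_snd holo_at_add holo_at_mult holo_at_uminus holo_at_diff
  holo_at_power holo_at_divide

lemma holo_at_field_differentiable_lines:
  assumes "holo_at f (x, y)"
  shows "(\<lambda>t. f (t, y)) field_differentiable at x" "(\<lambda>t. f (x, t)) field_differentiable at y"
proof -
  obtain c1 c2 where f: "(f has_derivative (\<lambda>h. c1 * fst h + c2 * snd h)) (at (x, y))"
    using assms unfolding holo_at_def by blast
  have "((\<lambda>t. (t, y)) has_derivative (\<lambda>h. (h, 0))) (at x)"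
       "((\<lambda>t. (x, t)) has_derivative (\<lambda>h. (0, h))) (at y)"
    by (auto intro!: derivative_eq_intros)
  from this[THEN has_derivative_compose, OF f]
  have "((\<lambda>t. f (t, y)) has_field_derivative c1) (at x)"
       "((\<lambda>t. f (x, t)) has_field_derivative c2) (at y)"
    by (simp_all add: has_field_derivative_def)
  then show "(\<lambda>t. f (t, y)) field_differentiable at x" "(\<lambda>t. f (x, t)) field_differentiable at y"
    by (auto simp: field_differentiable_def)
qed

lemma eventually_nhds_coordinate_lines:
  assumes "open V" "(x, y) \<in> V"
  shows "\<forall>\<^sub>F t in nhds x. (t, y) \<in> V" "\<forall>\<^sub>F t in nhds y. (x, t) \<in> V"
  using topological_tendstoD[OF tendsto_Pair[OF filterlim_ident tendsto_const] assms]
        topological_tendstoD[OF tendsto_Pair[OF tendsto_const filterlim_ident] assms]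
  by simp_all

lemma pd_cong_open:
  assumes "open V" "p \<in> V" "\<And>q. q \<in> V \<Longrightarrow> f q = g q"
  shows "pd i f p = pd i g p"
proof -
  obtain x y where p: "p = (x, y)" by fastforce
  note lines = eventually_nhds_coordinate_lines[OF assms(1) assms(2)[unfolded p]]
  have "\<forall>\<^sub>F t in nhds x. f (t, y) = g (t, y)" "\<forall>\<^sub>F t in nhds y. f (x, t) = g (x, t)"
    using lines by (auto elim!: eventually_mono intro: assms(3))
  then show ?thesis
    unfolding pd_def p by (simp add: deriv_cong_ev)
qed

section \<open>The Hess connection in an \<open>(x1, x2)\<close>-chart\<close>

lemma all_nat_less_2: "(\<forall>n<2. P n) \<longleftrightarrow> P 0 \<and> P (1::nat)"
  by (auto simp: less_2_cases_iff)

lemma sum_nat_lessThan_2: "(\<Sum>n<2. f n) = f 0 + f (1::nat)"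
  by (simp add: numeral_2_eq_2)

definition gamma0 :: "complex \<Rightarrow> complex \<Rightarrow> complex \<Rightarrow> complex \<Rightarrow> complex \<times> complex \<Rightarrow> complex" where
  "gamma0 a1 a2 a3 a4 q = - disc_dx a1 a3 (fst q) (snd q) / (2 * disc a1 a2 a3 a4 (fst q) (snd q))"

definition gamma1 :: "complex \<Rightarrow> complex \<Rightarrow> complex \<Rightarrow> complex \<Rightarrow> complex \<times> complex \<Rightarrow> complex" where
  "gamma1 a1 a2 a3 a4 q = - disc_dy a2 a3 (fst q) (snd q) / (2 * disc a1 a2 a3 a4 (fst q) (snd q))"

definition hess_gamma ::
    "complex \<Rightarrow> complex \<Rightarrow> complex \<Rightarrow> complex \<Rightarrow> nat \<Rightarrow> nat \<Rightarrow> nat \<Rightarrow> complex \<times> complex \<Rightarrow> complex" where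
  "hess_gamma a1 a2 a3 a4 k i j =
     (if k = 0 \<and> i = 0 \<and> j = 0 then gamma0 a1 a2 a3 a4
      else if k = 1 \<and> i = 1 \<and> j = 1 then gamma1 a1 a2 a3 a4
      else (\<lambda>_. 0))"

lemma has_field_derivative_inverse_of_root:
  fixes r g :: "'a::real_normed_field \<Rightarrow> 'a"
  assumes r: "(r has_field_derivative r') (at t)" and g: "(g has_field_derivative g') (at t)"
    and root: "\<forall>\<^sub>F s in nhds t. r s ^ 2 = g s" and nz: "r t \<noteq> 0"
  shows "((\<lambda>s. 1 / r s) has_field_derivative - g' / (2 * g t) * (1 / r t)) (at t)"
proof -
  have "((\<lambda>s. r s ^ 2) has_field_derivative 2 * r t * r') (at t)"
    using DERIV_power[OF r, of 2] by (simp add: mult_ac)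
  then have "(g has_field_derivative 2 * r t * r') (at t)"
    using DERIV_cong_ev[OF refl root refl] by simp
  then have g': "g' = 2 * r t * r'"
    using g by (rule DERIV_unique[rotated])
  have gt: "g t = r t ^ 2"
    using eventually_nhds_x_imp_x[OF root] by simp
  have "((\<lambda>s. 1 / r s) has_field_derivative - r' / r t ^ 2) (at t)"
    using DERIV_divide[OF DERIV_const r nz, of 1] by (simp add: power2_eq_square)
  then show ?thesis
    using nz by (simp add: g' gt field_simps power2_eq_square)
qed

lemma x12_chart_root:
  assumes "x12_chart a1 a2 a3 a4 V \<phi>" "q \<in> V"
  shows "(2 * \<phi> q + fst q * snd q - a3)^2 = disc a1 a2 a3 a4 (fst q) (snd q)"
    and "2 * \<phi> q + fst q * snd q - a3 \<noteq> 0"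
  using assms unfolding x12_chart_def on_S_iff_disc by auto

lemma x12_chart_disc_nonzero:
  "x12_chart a1 a2 a3 a4 V \<phi> \<Longrightarrow> q \<in> V \<Longrightarrow> disc a1 a2 a3 a4 (fst q) (snd q) \<noteq> 0"
  using x12_chart_root by (metis power_not_zero)

lemma x12_chart_omega_derivatives:
  assumes ch: "x12_chart a1 a2 a3 a4 V \<phi>" and xy: "(x, y) \<in> V"
  shows "((\<lambda>t. omega a3 \<phi> 0 1 (t, y)) has_field_derivative
            gamma0 a1 a2 a3 a4 (x, y) * omega a3 \<phi> 0 1 (x, y)) (at x)"
    and "((\<lambda>t. omega a3 \<phi> 0 1 (x, t)) has_field_derivative
            gamma1 a1 a2 a3 a4 (x, y) * omega a3 \<phi> 0 1 (x, y)) (at y)"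
proof -
  from ch have "open V" "holo2 V \<phi>"
    by (simp_all add: x12_chart_def)
  then have "holo_at \<phi> (x, y)"
    using xy holo2_iff_holo_at by blast
  note lines = eventually_nhds_coordinate_lines[OF \<open>open V\<close> xy]
  obtain \<phi>x \<phi>y where
    "((\<lambda>t. \<phi> (t, y)) has_field_derivative \<phi>x) (at x)"
    "((\<lambda>t. \<phi> (x, t)) has_field_derivative \<phi>y) (at y)"
    using holo_at_field_differentiable_lines[OF \<open>holo_at \<phi> (x, y)\<close>]
    unfolding field_differentiable_def by blast
  then have d:
    "((\<lambda>t. 2 * \<phi> (t, y) + t * y - a3) has_field_derivative 2 * \<phi>x + y) (at x)"
    "((\<lambda>t. 2 * \<phi> (x, t) + x * t - a3) has_field_derivative 2 * \<phi>y + x) (at y)"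
    by (auto intro!: derivative_eq_intros)
  have root:
    "\<forall>\<^sub>F t in nhds x. (2 * \<phi> (t, y) + t * y - a3)^2 = disc a1 a2 a3 a4 t y"
    "\<forall>\<^sub>F t in nhds y. (2 * \<phi> (x, t) + x * t - a3)^2 = disc a1 a2 a3 a4 x t"
    using lines by (auto elim!: eventually_mono dest: x12_chart_root(1)[OF ch])
  have nz: "2 * \<phi> (x, y) + x * y - a3 \<noteq> 0"
    using x12_chart_root(2)[OF ch xy] by simp
  have omega_01: "omega a3 \<phi> 0 1 q = 1 / (2 * \<phi> q + fst q * snd q - a3)" for q
    by (simp add: omega_def)
  show "((\<lambda>t. omega a3 \<phi> 0 1 (t, y)) has_field_derivative
           gamma0 a1 a2 a3 a4 (x, y) * omega a3 \<phi> 0 1 (x, y)) (at x)"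
    unfolding omega_01 gamma0_def fst_conv snd_conv
    by (rule has_field_derivative_inverse_of_root[OF d(1) has_field_derivative_disc_x root(1) nz])
  show "((\<lambda>t. omega a3 \<phi> 0 1 (x, t)) has_field_derivative
           gamma1 a1 a2 a3 a4 (x, y) * omega a3 \<phi> 0 1 (x, y)) (at y)"
    unfolding omega_01 gamma1_def fst_conv snd_conv
    by (rule has_field_derivative_inverse_of_root[OF d(2) has_field_derivative_disc_y root(2) nz])
qed

lemma x12_chart_pd_omega:
  assumes ch: "x12_chart a1 a2 a3 a4 V \<phi>" and "p \<in> V" "i < 2"
  shows "pd i (omega a3 \<phi> j k) p = hess_gamma a1 a2 a3 a4 i i i p * omega a3 \<phi> j k p"
proof -
  obtain x y where p: "p = (x, y)" by fastforce
  define c :: complex where "c = (if j = 0 \<and> k = 1 then 1 else if j = 1 \<and> k = 0 then -1 else 0)"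
  have omega_jk: "omega a3 \<phi> j k q = c * omega a3 \<phi> 0 1 q" for q
    by (simp add: omega_def c_def)
  note derivs = x12_chart_omega_derivatives[OF ch \<open>p \<in> V\<close>[unfolded p]]
  have "((\<lambda>t. omega a3 \<phi> j k (t, y)) has_field_derivative
          c * (gamma0 a1 a2 a3 a4 (x, y) * omega a3 \<phi> 0 1 (x, y))) (at x)"
       "((\<lambda>t. omega a3 \<phi> j k (x, t)) has_field_derivative
          c * (gamma1 a1 a2 a3 a4 (x, y) * omega a3 \<phi> 0 1 (x, y))) (at y)"
    unfolding omega_jk by (rule DERIV_cmult derivs)+
  note pd_omega_jk = this[THEN DERIV_imp_deriv]
  from \<open>i < 2\<close> consider "i = 0" | "i = 1" by fastforce
  then show ?thesis
    by cases (simp_all add: pd_def p pd_omega_jk hess_gamma_def omega_jk[of "(x, y)"])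
qed

lemma hess_conn_unique:
  assumes ch: "x12_chart a1 a2 a3 a4 V \<phi>" and hc: "hess_conn a3 V \<phi> \<Gamma>"
    and "p \<in> V" "k < 2" "i < 2" "j < 2"
  shows "\<Gamma> k i j p = hess_gamma a1 a2 a3 a4 k i j p"
proof -
  have sym: "\<Gamma> k i j p = \<Gamma> k j i p"
    and parallel: "pd i (omega a3 \<phi> j k) p =
      (\<Sum>l<2. \<Gamma> l i j p * omega a3 \<phi> l k p) + (\<Sum>l<2. \<Gamma> l i k p * omega a3 \<phi> j l p)"
    and foliations: "\<Gamma> 0 i 1 p = 0" "\<Gamma> 1 i 0 p = 0"
    if "k < 2" "i < 2" "j < 2" for k i j
    using hc \<open>p \<in> V\<close> that unfolding hess_conn_def by blast+
  have zeros: "\<Gamma> 0 0 1 p = 0" "\<Gamma> 0 1 0 p = 0" "\<Gamma> 0 1 1 p = 0"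
              "\<Gamma> 1 0 0 p = 0" "\<Gamma> 1 0 1 p = 0" "\<Gamma> 1 1 0 p = 0"
    using foliations[of 0 0 0] foliations[of 0 1 0] sym[of 0 1 0] sym[of 1 1 0] by simp_all
  have omega_01: "omega a3 \<phi> 0 1 p \<noteq> 0"
    using ch \<open>p \<in> V\<close> unfolding x12_chart_def omega_def by auto
  have omega_diag: "omega a3 \<phi> l l p = 0" for l
    by (auto simp: omega_def)
  \<comment> \<open>the simp rule \<open>One_nat_def\<close> would turn \<open>\<Gamma> 1 0 1 p\<close> into \<open>\<Gamma> (Suc 0) 0 (Suc 0) p\<close>, out of reach of \<open>zeros\<close>\<close>
  have "\<Gamma> 0 0 0 p * omega a3 \<phi> 0 1 p = pd 0 (omega a3 \<phi> 0 1) p"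
    using parallel[of 1 0 0] by (simp add: sum_nat_lessThan_2 zeros omega_diag del: One_nat_def)
  also have "\<dots> = gamma0 a1 a2 a3 a4 p * omega a3 \<phi> 0 1 p"
    using x12_chart_pd_omega[OF ch \<open>p \<in> V\<close>] by (simp add: hess_gamma_def)
  finally have "\<Gamma> 0 0 0 p = gamma0 a1 a2 a3 a4 p"
    using omega_01 by simp
  have "\<Gamma> 1 1 1 p * omega a3 \<phi> 0 1 p = pd 1 (omega a3 \<phi> 0 1) p"
    using parallel[of 1 1 0] by (simp add: sum_nat_lessThan_2 zeros omega_diag del: One_nat_def)
  also have "\<dots> = gamma1 a1 a2 a3 a4 p * omega a3 \<phi> 0 1 p"
    using x12_chart_pd_omega[OF ch \<open>p \<in> V\<close>] by (simp add: hess_gamma_def del: One_nat_def)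
  finally have "\<Gamma> 1 1 1 p = gamma1 a1 a2 a3 a4 p"
    using omega_01 by simp
  with \<open>\<Gamma> 0 0 0 p = gamma0 a1 a2 a3 a4 p\<close> zeros \<open>k < 2\<close> \<open>i < 2\<close> \<open>j < 2\<close> show ?thesis
    by (auto simp: hess_gamma_def less_2_cases_iff)
qed

lemma holo_at_gamma0:
  assumes "disc a1 a2 a3 a4 (fst p) (snd p) \<noteq> 0"
  shows "holo_at (gamma0 a1 a2 a3 a4) p"
proof -
  have "holo_at (\<lambda>q. disc a1 a2 a3 a4 (fst q) (snd q)) p"
       "holo_at (\<lambda>q. disc_dx a1 a3 (fst q) (snd q)) p"
    unfolding disc_def disc_dx_def by (intro holo_at_intros)+
  then show ?thesis
    unfolding gamma0_def[abs_def] using assms by (intro holo_at_intros) simp_all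
qed

lemma holo_at_gamma1:
  assumes "disc a1 a2 a3 a4 (fst p) (snd p) \<noteq> 0"
  shows "holo_at (gamma1 a1 a2 a3 a4) p"
proof -
  have "holo_at (\<lambda>q. disc a1 a2 a3 a4 (fst q) (snd q)) p"
       "holo_at (\<lambda>q. disc_dy a2 a3 (fst q) (snd q)) p"
    unfolding disc_def disc_dy_def by (intro holo_at_intros)+
  then show ?thesis
    unfolding gamma1_def[abs_def] using assms by (intro holo_at_intros) simp_all
qed

lemma hess_conn_hess_gamma:
  assumes ch: "x12_chart a1 a2 a3 a4 V \<phi>"
  shows "hess_conn a3 V \<phi> (hess_gamma a1 a2 a3 a4)"
  unfolding hess_conn_def
proof (intro conjI ballI allI impI)
  fix k i j :: nat
  show "holo2 V (hess_gamma a1 a2 a3 a4 k i j)"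
    using holo_at_gamma0 holo_at_gamma1 x12_chart_disc_nonzero[OF ch]
    by (auto simp: holo2_iff_holo_at hess_gamma_def)
next
  fix p and k i j :: nat
  assume "p \<in> V" "k < 2" "i < 2" "j < 2"
  then show "hess_gamma a1 a2 a3 a4 k i j p = hess_gamma a1 a2 a3 a4 k j i p"
    by (auto simp: hess_gamma_def)
  from \<open>p \<in> V\<close> \<open>k < 2\<close> \<open>i < 2\<close> \<open>j < 2\<close>
  show "pd i (omega a3 \<phi> j k) p =
      (\<Sum>l<2. hess_gamma a1 a2 a3 a4 l i j p * omega a3 \<phi> l k p) +
      (\<Sum>l<2. hess_gamma a1 a2 a3 a4 l i k p * omega a3 \<phi> j l p)"
    by (auto simp: x12_chart_pd_omega[OF ch] sum_nat_lessThan_2 hess_gamma_def omega_def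
                   less_2_cases_iff)
next
  fix p and i :: nat
  show "hess_gamma a1 a2 a3 a4 0 i 1 p = 0" "hess_gamma a1 a2 a3 a4 1 i 0 p = 0"
    by (simp_all add: hess_gamma_def)
qed

lemma pd_const [simp]: "pd i (\<lambda>_. c) p = 0"
  by (simp add: pd_def)

lemma pd_gamma0:
  assumes "disc a1 a2 a3 a4 (fst p) (snd p) \<noteq> 0"
  shows "pd 1 (gamma0 a1 a2 a3 a4) p =
    - disc_log_mixed a1 a2 a3 a4 (fst p) (snd p) / (2 * disc a1 a2 a3 a4 (fst p) (snd p) ^ 2)"
proof -
  obtain x y where p: "p = (x, y)" by fastforce
  have "((\<lambda>t. - disc_dx a1 a3 x t / (2 * disc a1 a2 a3 a4 x t)) has_field_derivative
          - disc_log_mixed a1 a2 a3 a4 x y / (2 * disc a1 a2 a3 a4 x y ^ 2)) (at y)"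
    by (rule derivative_eq_intros has_field_derivative_disc_dx_y has_field_derivative_disc_y refl)+
       (use assms in \<open>simp_all add: p disc_log_mixed_def field_simps power2_eq_square\<close>)
  then show ?thesis
    by (simp add: pd_def p gamma0_def DERIV_imp_deriv)
qed

lemma pd_gamma1:
  assumes "disc a1 a2 a3 a4 (fst p) (snd p) \<noteq> 0"
  shows "pd 0 (gamma1 a1 a2 a3 a4) p =
    - disc_log_mixed a1 a2 a3 a4 (fst p) (snd p) / (2 * disc a1 a2 a3 a4 (fst p) (snd p) ^ 2)"
proof -
  obtain x y where p: "p = (x, y)" by fastforce
  have "((\<lambda>t. - disc_dy a2 a3 t y / (2 * disc a1 a2 a3 a4 t y)) has_field_derivative
          - disc_log_mixed a1 a2 a3 a4 x y / (2 * disc a1 a2 a3 a4 x y ^ 2)) (at x)"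
    by (rule derivative_eq_intros has_field_derivative_disc_dy_x has_field_derivative_disc_x refl)+
       (use assms in \<open>simp_all add: p disc_log_mixed_def field_simps power2_eq_square\<close>)
  then show ?thesis
    by (simp add: pd_def p gamma1_def DERIV_imp_deriv)
qed

lemma flat_on_hess_gamma_iff:
  "flat_on V (hess_gamma a1 a2 a3 a4) \<longleftrightarrow>
     (\<forall>p\<in>V. pd 1 (gamma0 a1 a2 a3 a4) p = 0 \<and> pd 0 (gamma1 a1 a2 a3 a4) p = 0)"
  unfolding flat_on_def curv_def
  by (simp add: all_nat_less_2 sum_nat_lessThan_2 hess_gamma_def)

lemma flat_on_cong:
  assumes "open V"
    and "\<And>q k i j. q \<in> V \<Longrightarrow> k < 2 \<Longrightarrow> i < 2 \<Longrightarrow> j < 2 \<Longrightarrow> \<Gamma> k i j q = \<Gamma>' k i j q"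
  shows "flat_on V \<Gamma> \<longleftrightarrow> flat_on V \<Gamma>'"
proof -
  have "curv \<Gamma> l k i j p = curv \<Gamma>' l k i j p"
    if "p \<in> V" "l < 2" "k < 2" "i < 2" "j < 2" for p l k i j
  proof -
    have "pd i (\<Gamma> l j k) p = pd i (\<Gamma>' l j k) p" "pd j (\<Gamma> l i k) p = pd j (\<Gamma>' l i k) p"
      using pd_cong_open[OF assms(1) \<open>p \<in> V\<close>] assms(2) that by blast+
    moreover have "\<Gamma> l' i' j' p = \<Gamma>' l' i' j' p" if "l' < 2" "i' < 2" "j' < 2" for l' i' j'
      using assms(2) \<open>p \<in> V\<close> that by blast
    ultimately show ?thesis
      using that by (simp add: curv_def sum_nat_lessThan_2)
  qed
  then show ?thesis
    unfolding flat_on_def by auto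
qed

lemma flat_on_x12_chart_iff:
  assumes ch: "x12_chart a1 a2 a3 a4 V \<phi>" and hc: "hess_conn a3 V \<phi> \<Gamma>"
  shows "flat_on V \<Gamma> \<longleftrightarrow> (\<forall>p\<in>V. disc_log_mixed a1 a2 a3 a4 (fst p) (snd p) = 0)"
proof -
  have "open V"
    using ch by (simp add: x12_chart_def)
  then have "flat_on V \<Gamma> \<longleftrightarrow> flat_on V (hess_gamma a1 a2 a3 a4)"
    by (rule flat_on_cong) (rule hess_conn_unique[OF ch hc])
  also have "\<dots> \<longleftrightarrow> (\<forall>p\<in>V. pd 1 (gamma0 a1 a2 a3 a4) p = 0 \<and> pd 0 (gamma1 a1 a2 a3 a4) p = 0)"
    by (rule flat_on_hess_gamma_iff)
  also have "\<dots> \<longleftrightarrow> (\<forall>p\<in>V. disc_log_mixed a1 a2 a3 a4 (fst p) (snd p) = 0)"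
    using x12_chart_disc_nonzero[OF ch] by (simp add: pd_gamma0 pd_gamma1 del: One_nat_def)
  finally show ?thesis .
qed

lemma x12_chart_exists:
  assumes "disc a1 a2 a3 a4 x0 y0 \<noteq> 0"
  shows "\<exists>V \<phi>. x12_chart a1 a2 a3 a4 V \<phi> \<and> (x0, y0) \<in> V"
proof -
  define d where "d q = disc a1 a2 a3 a4 (fst q) (snd q)" for q
  define c where "c = csqrt (disc a1 a2 a3 a4 x0 y0)"
  have c2: "c^2 = disc a1 a2 a3 a4 x0 y0" and "c \<noteq> 0"
    using assms by (auto simp: c_def)
  \<comment> \<open>dividing by \<open>c\<^sup>2\<close> moves \<open>d\<close> to 1 at \<open>(x0, y0)\<close>, away from the branch cut of \<open>csqrt\<close>\<close>
  define V where "V = {q. 0 < Re (d q / c^2)}"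
  define \<phi> where "\<phi> q = (c * csqrt (d q / c^2) - (fst q * snd q - a3)) / 2" for q
  have root: "2 * \<phi> q + fst q * snd q - a3 = c * csqrt (d q / c^2)" for q
    by (simp add: \<phi>_def field_simps)
  have "open V"
    unfolding V_def d_def disc_def
    by (rule open_Collect_less) (intro continuous_intros | simp add: \<open>c \<noteq> 0\<close>)+
  moreover have "(x0, y0) \<in> V"
    using assms by (simp add: V_def d_def c2)
  moreover have "holo_at \<phi> q" if "q \<in> V" for q
  proof -
    have "holo_at d q"
      unfolding d_def[abs_def] disc_def by (intro holo_at_intros)
    then have "holo_at (\<lambda>q. csqrt (d q / c^2)) q"
      using that \<open>c \<noteq> 0\<close> by (intro holo_at_csqrt holo_at_intros) (simp_all add: V_def)
    then show ?thesis
      unfolding \<phi>_def[abs_def] by (intro holo_at_intros) simp_all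
  qed
  moreover have "on_S a1 a2 a3 a4 (fst q) (snd q) (\<phi> q)" for q
    unfolding on_S_iff_disc root using \<open>c \<noteq> 0\<close> by (simp add: power_mult_distrib d_def)
  moreover have "2 * \<phi> q + fst q * snd q - a3 \<noteq> 0" if "q \<in> V" for q
    using that \<open>c \<noteq> 0\<close> unfolding root V_def by auto
  ultimately show ?thesis
    unfolding x12_chart_def holo2_iff_holo_at by blast
qed

lemma hess_flat_iff_disc_log_mixed:
  "hess_flat a1 a2 a3 a4 \<longleftrightarrow>
     (\<forall>x y. disc a1 a2 a3 a4 x y \<noteq> 0 \<longrightarrow> disc_log_mixed a1 a2 a3 a4 x y = 0)"
proof (intro iffI allI impI)
  fix x y
  assume flat: "hess_flat a1 a2 a3 a4" and "disc a1 a2 a3 a4 x y \<noteq> 0"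
  then obtain V \<phi> where ch: "x12_chart a1 a2 a3 a4 V \<phi>" and "(x, y) \<in> V"
    using x12_chart_exists by blast
  with flat hess_conn_hess_gamma[OF ch] have "flat_on V (hess_gamma a1 a2 a3 a4)"
    unfolding hess_flat_def by blast
  with \<open>(x, y) \<in> V\<close> show "disc_log_mixed a1 a2 a3 a4 x y = 0"
    unfolding flat_on_x12_chart_iff[OF ch hess_conn_hess_gamma[OF ch]] by force
next
  assume "\<forall>x y. disc a1 a2 a3 a4 x y \<noteq> 0 \<longrightarrow> disc_log_mixed a1 a2 a3 a4 x y = 0"
  then show "hess_flat a1 a2 a3 a4"
    unfolding hess_flat_def using flat_on_x12_chart_iff x12_chart_disc_nonzero by blast
qed

theorem theorem1p2:
  fixes a1 a2 a3 a4 :: complex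
  shows "hess_flat a1 a2 a3 a4 \<longleftrightarrow> (a1 = 0 \<and> a2 = 0 \<and> a3 = 0 \<and> a4 = 4)"
  unfolding hess_flat_iff_disc_log_mixed
  using ex_disc_log_mixed_nonzero disc_log_mixed_0004 by blast

end
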